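(* Let $p$ be a prime, $R$ a ring of characteristic $p$, $R[x]$ the polynomial ring in one variable, $a\in R\setminus\{0\}$, and $\phi\in\operatorname{Aut}_RR[x]$ defined by $\phi(x)=x+a$. If $a$ is not a zero-divisor of $R$, then $R[x]^{\phi}=R[x^p-a^{p-1}x]$.
   Context: $R[x]^{\phi}:=\{u\in R[x]\mid\phi(u)=u\}$. *)

theory Defs
  imports "HOL-Computational_Algebra.Polynomial"
begin

definition shift_aut :: "'a::comm_ring_1 \<Rightarrow> 'a poly \<Rightarrow> 'a poly" where
  "shift_aut a u = pcompose u [:a, 1:]"

definition fixed_ring :: "('a::comm_ring_1 poly \<Rightarrow> 'a poly) \<Rightarrow> 'a poly set" where
  "fixed_ring \<phi> = {u. \<phi> u = u}"

definition gen_subring :: "'a::comm_ring_1 poly \<Rightarrow> 'a poly set" where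
  "gen_subring f = range (\<lambda>q. pcompose q f)"

end

theory Submission
  imports Defs "HOL-Number_Theory.Cong"
begin

(*
  The shift u(x) |-> u(x + a) fixes f = x^p - a^(p-1) x, because (x + a)^p = x^p + a^p in
  characteristic p. As f is monic of degree p, an invariant u can be divided by f,
  u = f g + r with deg r < p, and since the shift does not raise degrees, uniqueness of this
  division forces g and r to be invariant as well. An invariant r of degree d with 0 < d < p
  is impossible: comparing the coefficients of x^(d-1) in r(x + a) = r(x) gives
  d a lc(r) = 0, where d is a unit modulo p and a is not a zero-divisor. Induction on the
  degree therefore writes every invariant as a polynomial in f.
*)

lemma of_nat_coprime_CHAR_mult_eq_0D:
  fixes x :: "'a::comm_ring_1"
  assumes "coprime n CHAR('a)" and "of_nat n * x = 0"
  shows "x = 0"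
proof -
  obtain m where "[n * m = 1] (mod CHAR('a))"
    using cong_solve_coprime_nat[OF assms(1)] by auto
  then have "of_nat n * of_nat m = (1::'a)"
    by (metis of_nat_1 of_nat_eq_iff_cong_CHAR of_nat_mult)
  then have "x = of_nat m * (of_nat n * x)"
    by (simp add: algebra_simps)
  with assms(2) show ?thesis by simp
qed

lemma pcompose_power: "pcompose (q ^ n) s = pcompose q s ^ n"
  for q s :: "'a::comm_ring_1 poly"
  by (induct n) (simp_all add: pcompose_mult pcompose_1)

lemma pcompose_monom: "pcompose (monom c n) s = smult c (s ^ n)"
  for s :: "'a::comm_ring_1 poly"
  by (simp add: monom_altdef pcompose_smult pcompose_power pcompose_pCons)

lemma coeff_linear_power_binomial:
  "coeff ([:a, 1:] ^ n) k = of_nat (n choose k) * a ^ (n - k)"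
  for a :: "'a::comm_ring_1"
proof -
  have "[:a, 1:] ^ n = ([:0, 1:] + [:a:]) ^ n" by simp
  also have "\<dots> = (\<Sum>j\<le>n. monom (of_nat (n choose j) * a ^ (n - j)) j)"
    unfolding binomial_ring
    by (intro sum.cong refl) (simp add: monom_altdef poly_const_pow of_nat_poly algebra_simps)
  finally show ?thesis
    by (simp add: coeff_sum binomial_eq_0)
qed

lemma coeff_shift_aut:
  "coeff (shift_aut a r) k = (\<Sum>i\<le>degree r. coeff r i * of_nat (i choose k) * a ^ (i - k))"
proof -
  have "shift_aut a r = (\<Sum>i\<le>degree r. smult (coeff r i) ([:a, 1:] ^ i))"
    unfolding shift_aut_def
    by (subst (1) poly_as_sum_of_monoms[symmetric]) (simp add: pcompose_sum pcompose_monom)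
  then show ?thesis
    by (simp add: coeff_sum coeff_linear_power_binomial mult.assoc)
qed

lemma coeff_shift_aut_pred_degree:
  assumes "degree r = Suc n"
  shows "coeff (shift_aut a r) n = coeff r n + of_nat (Suc n) * a * lead_coeff r"
proof -
  let ?t = "\<lambda>i. coeff r i * of_nat (i choose n) * a ^ (i - n)"
  have "coeff (shift_aut a r) n = ?t (Suc n) + ?t n + (\<Sum>i<n. ?t i)"
    unfolding coeff_shift_aut assms
    by (simp only: lessThan_Suc_atMost[symmetric] sum.lessThan_Suc add_ac)
  also have "(\<Sum>i<n. ?t i) = 0"
    by (simp add: binomial_eq_0)
  finally show ?thesis
    using assms by (simp add: algebra_simps)
qed

lemma shift_aut_fixed_imp_of_nat_degree_mult_eq_0:
  assumes "shift_aut a r = r"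
  shows "of_nat (degree r) * a * lead_coeff r = 0"
proof (cases "degree r")
  case (Suc n)
  from coeff_shift_aut_pred_degree[OF Suc, of a] show ?thesis
    using assms Suc by simp
qed simp

lemma degree_shift_aut_fixed_less_CHAR_eq_0:
  fixes a :: "'a::comm_ring_1"
  assumes "prime p" and "CHAR('a) = p" and a: "\<forall>b. a * b = 0 \<longrightarrow> b = 0"
    and fixed: "shift_aut a r = r" and deg: "degree r < p"
  shows "degree r = 0"
proof (rule ccontr)
  assume "degree r \<noteq> 0"
  then have "\<not> CHAR('a) dvd degree r"
    using deg assms(2) by (auto dest: nat_dvd_not_less)
  then have "coprime (degree r) CHAR('a)"
    using assms(1,2) prime_imp_coprime coprime_commute by blast
  moreover have "of_nat (degree r) * (a * lead_coeff r) = 0"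
    using shift_aut_fixed_imp_of_nat_degree_mult_eq_0[OF fixed] by (simp only: mult.assoc)
  ultimately have "a * lead_coeff r = 0"
    by (rule of_nat_coprime_CHAR_mult_eq_0D)
  then have "lead_coeff r = 0"
    using a by blast
  with \<open>degree r \<noteq> 0\<close> show False by simp
qed

lemma monic_division:
  fixes f u :: "'a::comm_ring_1 poly"
  assumes "lead_coeff f = 1" and "degree f > 0"
  obtains g r where "u = f * g + r" and "degree r < degree f"
proof -
  have "f \<noteq> 0" using assms by auto
  obtain g r where gr: "pseudo_divmod u f = (g, r)" by fastforce
  from pseudo_divmod[OF \<open>f \<noteq> 0\<close> gr] assms show ?thesis
    by (intro that[of g r]) auto
qed

lemma degree_monic_mult:
  fixes f h :: "'a::comm_ring_1 poly"
  assumes "lead_coeff f = 1" and "h \<noteq> 0"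
  shows "degree (f * h) = degree f + degree h"
  using assms by (intro antisym degree_mult_le le_degree) (simp add: coeff_mult_degree_sum)

lemma fixed_ring_subset_gen_subring:
  fixes f :: "'a::comm_ring_1 poly"
  assumes monic: "lead_coeff f = 1" and deg: "degree f > 0" and f_fixed: "shift_aut a f = f"
    and small_fixed: "\<And>r. shift_aut a r = r \<Longrightarrow> degree r < degree f \<Longrightarrow> degree r = 0"
  shows "fixed_ring (shift_aut a) \<subseteq> gen_subring f"
proof
  fix u assume "u \<in> fixed_ring (shift_aut a)"
  then have "shift_aut a u = u" by (simp add: fixed_ring_def)
  then show "u \<in> gen_subring f"
  proof (induction "degree u" arbitrary: u rule: less_induct)
    case less
    obtain g r where u: "u = f * g + r" and r: "degree r < degree f"
      using monic_division[OF monic deg] .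
    have "f * g + r = f * shift_aut a g + shift_aut a r"
      using less.prems f_fixed by (simp add: u shift_aut_def pcompose_add pcompose_mult)
    then have diff: "f * (g - shift_aut a g) = shift_aut a r - r"
      by (simp add: algebra_simps)
    have "degree (shift_aut a r) < degree f"
      using degree_pcompose_le[of r "[:a, 1:]"] r by (simp add: shift_aut_def)
    then have rem_deg: "degree (shift_aut a r - r) < degree f"
      using degree_diff_le_max[of "shift_aut a r" r] r by simp
    have g_fixed: "shift_aut a g = g"
    proof (rule ccontr)
      assume "shift_aut a g \<noteq> g"
      then have "degree f \<le> degree (f * (g - shift_aut a g))"
        using degree_monic_mult[OF monic, of "g - shift_aut a g"] by simp
      with diff rem_deg show False by simp
    qed
    with diff have "shift_aut a r = r" by simp
    then obtain c where c: "r = [:c:]"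
      using small_fixed r by (metis degree_eq_zeroE)
    show ?case
    proof (cases "g = 0")
      case True
      then have "u = pcompose [:c:] f" by (simp add: u c)
      then show ?thesis unfolding gen_subring_def by (rule range_eqI)
    next
      case False
      have "degree u = degree f + degree g"
        using degree_monic_mult[OF monic False] r by (simp add: u degree_add_eq_left)
      then have "degree g < degree u" using deg by simp
      with less.hyps g_fixed obtain q where "g = pcompose q f"
        unfolding gen_subring_def by blast
      then have "u = pcompose (pCons c q) f"
        by (simp add: u c pcompose_pCons)
      then show ?thesis unfolding gen_subring_def by (rule range_eqI)
    qed
  qed
qed

lemma gen_subring_subset_fixed_ring:
  assumes "shift_aut a f = f"
  shows "gen_subring f \<subseteq> fixed_ring (shift_aut a)"
  using assms
  by (auto simp: gen_subring_def fixed_ring_def shift_aut_def simp flip: pcompose_assoc)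

lemma degree_monom_minus_linear:
  fixes c :: "'a::comm_ring_1"
  assumes "1 < n"
  shows "degree (monom 1 n - smult c [:0, 1:]) = n"
    and "lead_coeff (monom 1 n - smult c [:0, 1:]) = 1"
proof -
  have coeff: "coeff (monom 1 n - smult c [:0, 1:]) k =
      (if k = n then 1 else if k = 1 then - c else 0)" for k
    using assms by (auto simp: coeff_monom coeff_pCons split: nat.splits)
  show "degree (monom 1 n - smult c [:0, 1:]) = n"
    by (intro antisym degree_le le_degree allI impI; simp only: coeff) (use assms in auto)
  then show "lead_coeff (monom 1 n - smult c [:0, 1:]) = 1"
    by (simp only: coeff) simp
qed

lemma shift_aut_Artin_Schreier:
  fixes a :: "'a::comm_ring_1"
  assumes "prime p" and "CHAR('a) = p"
  shows "shift_aut a (monom 1 p - smult (a ^ (p - 1)) [:0, 1:]) =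
    monom 1 p - smult (a ^ (p - 1)) [:0, 1:]"
proof -
  have "[:a, 1:] ^ p = ([:0, 1:] + [:a:]) ^ p" by simp
  also have "\<dots> = [:0, 1:] ^ p + [:a:] ^ p"
    using assms by (intro freshmans_dream) simp_all
  finally have frobenius: "[:a, 1:] ^ p = monom 1 p + [:a ^ p:]"
    by (simp add: monom_altdef poly_const_pow)
  have "a ^ (p - 1) * a = a ^ p"
    using prime_gt_0_nat[OF assms(1)] by (simp flip: power_Suc2)
  then show ?thesis
    by (simp add: shift_aut_def pcompose_diff pcompose_monom pcompose_smult pcompose_pCons frobenius)
qed

theorem lemma2p4:
  fixes a :: "'a::comm_ring_1" and p :: nat
  assumes "prime p"
    and "CHAR('a) = p"
    and "a \<noteq> 0"
    and "\<forall>b::'a. a * b = 0 \<longrightarrow> b = 0"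
  shows "fixed_ring (shift_aut a) = gen_subring (monom 1 p - smult (a ^ (p - 1)) [:0, 1:])"
proof -
  define f where "f = (monom 1 p - smult (a ^ (p - 1)) [:0, 1:] :: 'a poly)"
  have "1 < p" using assms(1) prime_gt_1_nat by blast
  then have deg: "degree f = p" and monic: "lead_coeff f = 1"
    unfolding f_def by (rule degree_monom_minus_linear)+
  have fixed: "shift_aut a f = f"
    unfolding f_def using assms(1,2) by (rule shift_aut_Artin_Schreier)
  have "fixed_ring (shift_aut a) \<subseteq> gen_subring f"
  proof (rule fixed_ring_subset_gen_subring[OF monic _ fixed])
    show "degree f > 0" using \<open>1 < p\<close> deg by simp
    show "degree r = 0" if "shift_aut a r = r" and "degree r < degree f" for r
      using that(2) deg by (intro degree_shift_aut_fixed_less_CHAR_eq_0[OF assms(1,2,4) that(1)]) simp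
  qed
  with gen_subring_subset_fixed_ring[OF fixed] show ?thesis
    by (simp add: f_def)
qed

end
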